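(* Let $\mathbf x_1,\dots,\mathbf x_n\in\mathbb C^N$ be orthonormal with $n\le N$, $\mathbf X=[\mathbf x_1\ \cdots\ \mathbf x_n]$, $\mathbf Y=[\mathrm{Re}(\mathbf X)\ \ \mathrm{Im}(\mathbf X)]\in\mathbb R^{N\times 2n}$ and $\mathbf A=\mathbf X^T\mathbf X\mathbf X^H\mathbf X^*$. Then the $2n$ eigenvalues of $\mathbf Y^T\mathbf Y$ are $$\Big\{\tfrac{1+\sqrt{\lambda_k(\mathbf A)}}{2},\ \tfrac{1-\sqrt{\lambda_k(\mathbf A)}}{2}\ :\ k=1,\dots,n\Big\}.$$
   Context: $^*$ denotes entrywise conjugation; $\lambda_k(\mathbf A)$ are the eigenvalues of the Hermitian positive semidefinite matrix $\mathbf A$. *)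

theory Defs
  imports "Jordan_Normal_Form.Matrix" "Jordan_Normal_Form.Char_Poly" "HOL-Library.Multiset"
begin

text \<open>M is the multiset of eigenvalues (with algebraic multiplicity) of the square matrix A,
  i.e. the characteristic polynomial of A splits as the product of (x - a) over a in M.\<close>
definition is_eigenvalue_mset :: "'a :: comm_ring_1 mat \<Rightarrow> 'a multiset \<Rightarrow> bool" where
  "is_eigenvalue_mset A M \<longleftrightarrow> char_poly A = prod_mset (image_mset (\<lambda>a. [:- a, 1:]) M)"

definition mat_conj :: "complex mat \<Rightarrow> complex mat" where
  "mat_conj X = map_mat cnj X"

definition mat_herm :: "complex mat \<Rightarrow> complex mat" where
  "mat_herm X = transpose_mat (map_mat cnj X)"

definition re_im_mat :: "complex mat \<Rightarrow> real mat" where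
  "re_im_mat X = mat (dim_row X) (2 * dim_col X)
     (\<lambda>(i, j). if j < dim_col X then Re (X $$ (i, j)) else Im (X $$ (i, j - dim_col X)))"

end

theory Submission
  imports Defs
begin

text \<open>
  The complexification of Y^T Y is similar to a block matrix via the change of basis
  T = [[I, I], [-iI, iI]]: Y T = [conj X, X] =: W, and since T^H T = 2I, the matrix
  Y^T Y = Y^H Y is similar to (1/2) W^H W = (1/2) [[I, B], [B^H, I]] with B = X^T X
  (this is where orthonormality enters).  The characteristic polynomial of a block
  matrix with scalar diagonal blocks c I is det((x - c)^2 I - B C); hence
  char(Y^T Y)(r) = (1/4)^n char(B B^H)(4 (r - 1/2)^2), and B B^H = A.  Finally A = B B^H
  is positive semidefinite, so every eigenvalue mu is nonnegative, and the quadratic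
  4 (r - 1/2)^2 - mu factors as 4 (r - (1 + sqrt mu)/2) (r - (1 - sqrt mu)/2).
\<close>

lemma dim_mat_herm [simp]:
  "dim_row (mat_herm A) = dim_col A" "dim_col (mat_herm A) = dim_row A"
  by (simp_all add: mat_herm_def)

lemma index_mat_herm [simp]:
  "i < dim_col A \<Longrightarrow> j < dim_row A \<Longrightarrow> mat_herm A $$ (i, j) = cnj (A $$ (j, i))"
  by (simp add: mat_herm_def)

lemma mat_herm_carrier [simp]: "A \<in> carrier_mat m n \<Longrightarrow> mat_herm A \<in> carrier_mat n m"
  by (auto simp: mat_herm_def)

lemma dim_mat_conj [simp]:
  "dim_row (mat_conj A) = dim_row A" "dim_col (mat_conj A) = dim_col A"
  by (simp_all add: mat_conj_def)

lemma index_mat_conj [simp]: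
  "i < dim_row A \<Longrightarrow> j < dim_col A \<Longrightarrow> mat_conj A $$ (i, j) = cnj (A $$ (i, j))"
  by (simp add: mat_conj_def)

lemma mat_conj_carrier [simp]: "A \<in> carrier_mat m n \<Longrightarrow> mat_conj A \<in> carrier_mat m n"
  by (auto simp: mat_conj_def)

lemma mat_herm_mult:
  assumes "A \<in> carrier_mat m k" and "B \<in> carrier_mat k n"
  shows "mat_herm (A * B) = mat_herm B * mat_herm A"
  using assms by (intro eq_matI) (auto simp: scalar_prod_def cnj_sum mult.commute)

lemma mat_conj_mult:
  assumes "A \<in> carrier_mat m k" and "B \<in> carrier_mat k n"
  shows "mat_conj (A * B) = mat_conj A * mat_conj B"
  using assms by (intro eq_matI) (auto simp: scalar_prod_def cnj_sum)

lemma mat_herm_transpose: "mat_herm (transpose_mat A) = mat_conj A"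
  by (intro eq_matI) auto

lemma mat_herm_conj: "mat_herm (mat_conj A) = transpose_mat A"
  by (intro eq_matI) auto

lemma mat_conj_herm: "mat_conj (mat_herm A) = transpose_mat A"
  by (intro eq_matI) auto

lemma mat_herm_smult: "mat_herm (c \<cdot>\<^sub>m A) = cnj c \<cdot>\<^sub>m mat_herm A"
  by (intro eq_matI) auto

lemma mat_conj_one [simp]: "mat_conj (1\<^sub>m n) = 1\<^sub>m n"
  by (intro eq_matI) auto

lemma mat_herm_four_block:
  assumes "A \<in> carrier_mat m1 n1" "B \<in> carrier_mat m1 n2" "C \<in> carrier_mat m2 n1" "D \<in> carrier_mat m2 n2"
  shows "mat_herm (four_block_mat A B C D)
    = four_block_mat (mat_herm A) (mat_herm C) (mat_herm B) (mat_herm D)"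
  unfolding mat_herm_def
  using assms by (simp add: map_four_block_mat[OF assms] transpose_four_block_mat)

lemma mat_herm_of_real:
  "mat_herm (map_mat complex_of_real Y) = map_mat complex_of_real (transpose_mat Y)"
  by (intro eq_matI) auto

lemma of_real_gram:
  assumes "Y \<in> carrier_mat m n"
  shows "map_mat complex_of_real (transpose_mat Y * Y)
    = mat_herm (map_mat complex_of_real Y) * map_mat complex_of_real Y"
  using assms by (simp add: of_real_hom.mat_hom_mult[of _ n m _ n] mat_herm_of_real)

subsection \<open>Block matrices with scalar diagonal\<close>

lemma scalar_mat_mult_left:
  fixes A :: "'a :: comm_ring_1 mat"
  assumes "A \<in> carrier_mat n m"
  shows "(a \<cdot>\<^sub>m 1\<^sub>m n) * A = a \<cdot>\<^sub>m A"
  using assms mult_smult_assoc_mat[of "1\<^sub>m n" n n A m a] by simp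

lemma scalar_mat_mult_right:
  fixes A :: "'a :: comm_ring_1 mat"
  assumes "A \<in> carrier_mat m n"
  shows "A * (a \<cdot>\<^sub>m 1\<^sub>m n) = a \<cdot>\<^sub>m A"
  using assms mult_smult_distrib[of A m n "1\<^sub>m n" n a] by simp

text \<open>Characteristic polynomial of [[c I, B], [C, c I]]: the diagonal blocks commute with
  everything, so the block determinant formula applies.\<close>

lemma char_poly_scalar_four_block:
  fixes B C :: "'a :: field mat"
  assumes B: "B \<in> carrier_mat n n" and C: "C \<in> carrier_mat n n"
  shows "poly (char_poly (four_block_mat (c \<cdot>\<^sub>m 1\<^sub>m n) B C (c \<cdot>\<^sub>m 1\<^sub>m n))) x
    = det ((x - c)^2 \<cdot>\<^sub>m 1\<^sub>m n - B * C)"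
proof -
  let ?D = "(x - c) \<cdot>\<^sub>m 1\<^sub>m n"
  have "poly (char_poly (four_block_mat (c \<cdot>\<^sub>m 1\<^sub>m n) B C (c \<cdot>\<^sub>m 1\<^sub>m n))) x
      = det (- char_matrix (four_block_mat (c \<cdot>\<^sub>m 1\<^sub>m n) B C (c \<cdot>\<^sub>m 1\<^sub>m n)) x)"
    using B C by (intro char_poly_matrix[of _ "n + n"]) auto
  also have "- char_matrix (four_block_mat (c \<cdot>\<^sub>m 1\<^sub>m n) B C (c \<cdot>\<^sub>m 1\<^sub>m n)) x
      = four_block_mat ?D (- B) (- C) ?D"
    using B C by (intro eq_matI) (auto simp: char_matrix_def)
  also have "det \<dots> = det (?D * ?D - (- B) * (- C))"
    using B C by (intro det_four_block_mat)
      (auto simp: scalar_mat_mult_left scalar_mat_mult_right[of _ n])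
  also have "?D * ?D - (- B) * (- C) = (x - c)^2 \<cdot>\<^sub>m 1\<^sub>m n - B * C"
    using B C by (intro eq_matI) (auto simp: scalar_mat_mult_left power2_eq_square)
  finally show ?thesis .
qed

lemma det_scalar_minus_smult:
  fixes A :: "'a :: field mat"
  assumes A: "A \<in> carrier_mat n n" and a: "a \<noteq> 0"
  shows "det (y \<cdot>\<^sub>m 1\<^sub>m n - a \<cdot>\<^sub>m A) = a ^ n * poly (char_poly A) (y / a)"
proof -
  have "y \<cdot>\<^sub>m 1\<^sub>m n - a \<cdot>\<^sub>m A = a \<cdot>\<^sub>m (- char_matrix A (y / a))"
    using A a by (intro eq_matI) (auto simp: char_matrix_def algebra_simps)
  then show ?thesis
    using A by (simp add: char_poly_matrix[OF A] char_matrix_def)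
qed

subsection \<open>Positivity of C C^H\<close>

lemma mult_mat_vec_cscalar_prod:
  assumes C: "C \<in> carrier_mat n m" and v: "v \<in> carrier_vec n" and w: "w \<in> carrier_vec m"
  shows "(C *\<^sub>v w) \<bullet>c v = w \<bullet>c (mat_herm C *\<^sub>v v)"
proof -
  have "(C *\<^sub>v w) \<bullet>c v = (\<Sum>i<n. \<Sum>k<m. C $$ (i, k) * w $ k * cnj (v $ i))"
    using C v w by (simp add: scalar_prod_def sum_distrib_right lessThan_atLeast0)
  also have "\<dots> = (\<Sum>k<m. \<Sum>i<n. C $$ (i, k) * w $ k * cnj (v $ i))"
    by (rule sum.swap)
  also have "\<dots> = w \<bullet>c (mat_herm C *\<^sub>v v)"
    using C v w by (simp add: scalar_prod_def sum_distrib_left cnj_sum lessThan_atLeast0 mult_ac)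
  finally show ?thesis .
qed

text \<open>Real eigenvalues of C C^H are nonnegative: for an eigenvector v,
  mu (v, v) = (C C^H v, v) = (C^H v, C^H v).\<close>

lemma eigenvalue_mult_herm_nonneg:
  assumes C: "C \<in> carrier_mat n m" and ev: "eigenvalue (C * mat_herm C) (complex_of_real \<mu>)"
  shows "\<mu> \<ge> 0"
proof -
  obtain v where v: "v \<in> carrier_vec n" "v \<noteq> 0\<^sub>v n"
    and eig: "(C * mat_herm C) *\<^sub>v v = complex_of_real \<mu> \<cdot>\<^sub>v v"
    using ev C unfolding eigenvalue_def eigenvector_def by auto
  define w where "w = mat_herm C *\<^sub>v v"
  have w: "w \<in> carrier_vec m"
    unfolding w_def using mult_mat_vec_carrier[OF mat_herm_carrier[OF C] v(1)] .
  have "C *\<^sub>v w = complex_of_real \<mu> \<cdot>\<^sub>v v"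
    using assoc_mult_mat_vec[OF C mat_herm_carrier[OF C] v(1)] eig by (simp add: w_def)
  then have "complex_of_real \<mu> * (v \<bullet>c v) = (C *\<^sub>v w) \<bullet>c v"
    using v by simp
  also have "\<dots> = w \<bullet>c w"
    using mult_mat_vec_cscalar_prod[OF C v(1) w] by (simp add: w_def)
  finally have "0 \<le> complex_of_real \<mu> * (v \<bullet>c v)" using conjugate_square_ge_0_vec[of w] by simp
  moreover have "0 < v \<bullet>c v" using v by simp
  ultimately show ?thesis
    by (auto simp: less_complex_def less_eq_complex_def zero_le_mult_iff)
qed

lemma poly_linear_factors:
  fixes x :: "'a :: comm_ring_1"
  shows "poly (\<Prod>a\<in>#M. [:- a, 1:]) x = (\<Prod>a\<in>#M. x - a)"
proof -
  have linear: "poly [:- a, 1:] x = x - a" for a by simp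
  show ?thesis unfolding poly_prod_mset linear ..
qed

lemma poly_linear_factors_of_real:
  "poly (\<Prod>a\<in>#image_mset complex_of_real M. [:- a, 1:]) (complex_of_real x)
    = complex_of_real (\<Prod>\<mu>\<in>#M. x - \<mu>)"
  unfolding poly_linear_factors by (induction M) simp_all

lemma degree_linear_factors:
  "degree (\<Prod>a\<in>#M. [:- a, 1 :: 'a :: idom:]) = size M"
proof (induction M)
  case (add a M)
  have "(\<Prod>a\<in>#M. [:- a, 1 :: 'a:]) \<noteq> 0" by (auto simp: prod_mset_zero_iff)
  then have "degree ([:- a, 1:] * (\<Prod>a\<in>#M. [:- a, 1 :: 'a:]))
      = degree [:- a, 1 :: 'a:] + degree (\<Prod>a\<in>#M. [:- a, 1 :: 'a:])"
    by (intro degree_mult_eq) auto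
  then show ?case using add by simp
qed simp

lemma is_eigenvalue_mset_size:
  fixes A :: "'a :: idom mat"
  assumes "A \<in> carrier_mat n n" and "is_eigenvalue_mset A M"
  shows "size M = n"
proof -
  have "degree (char_poly A) = n" using degree_monic_char_poly[OF assms(1)] by simp
  then show ?thesis using assms(2) by (simp add: is_eigenvalue_mset_def degree_linear_factors)
qed

lemma is_eigenvalue_mset_eigenvalue:
  fixes A :: "'a :: field mat"
  assumes "A \<in> carrier_mat n n" and "is_eigenvalue_mset A M" and "a \<in># M"
  shows "eigenvalue A a"
  using assms by (simp add: eigenvalue_root_char_poly is_eigenvalue_mset_def poly_linear_factors
    prod_mset_zero_iff)

lemma eigenvalue_mset_mult_herm_nonneg:
  assumes C: "C \<in> carrier_mat n m"
    and eig: "is_eigenvalue_mset (C * mat_herm C) (image_mset complex_of_real M)"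
  shows "\<forall>\<mu>\<in>#M. \<mu> \<ge> 0"
  using is_eigenvalue_mset_eigenvalue[OF mult_carrier_mat[OF C mat_herm_carrier[OF C]] eig]
    eigenvalue_mult_herm_nonneg[OF C] by auto

subsection \<open>Separating real and imaginary parts\<close>

definition conj_block :: "complex mat \<Rightarrow> complex mat" where
  "conj_block X = four_block_mat (mat_conj X) X (0\<^sub>m 0 (dim_col X)) (0\<^sub>m 0 (dim_col X))"

definition re_im_change :: "nat \<Rightarrow> complex mat" where
  "re_im_change n = four_block_mat (1\<^sub>m n) (1\<^sub>m n) ((- \<i>) \<cdot>\<^sub>m 1\<^sub>m n) (\<i> \<cdot>\<^sub>m 1\<^sub>m n)"

lemma re_im_change_carrier [simp]: "re_im_change n \<in> carrier_mat (2 * n) (2 * n)"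
  unfolding re_im_change_def mult_2 by (rule four_block_carrier_mat) auto

lemma re_im_change_inverse:
  "((1 / 2) \<cdot>\<^sub>m mat_herm (re_im_change n)) * re_im_change n = 1\<^sub>m (2 * n)"
proof -
  have herm: "mat_herm (re_im_change n) = four_block_mat (1\<^sub>m n) (\<i> \<cdot>\<^sub>m 1\<^sub>m n) (1\<^sub>m n) ((- \<i>) \<cdot>\<^sub>m 1\<^sub>m n)"
    unfolding re_im_change_def by (subst mat_herm_four_block[of _ n n]) (auto simp: mat_herm_smult)
  have "mat_herm (re_im_change n) * re_im_change n
      = four_block_mat (2 \<cdot>\<^sub>m 1\<^sub>m n) (0\<^sub>m n n) (0\<^sub>m n n) (2 \<cdot>\<^sub>m 1\<^sub>m n)"
    unfolding herm unfolding re_im_change_def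
    by (subst mult_four_block_mat[of _ n n _ n _ n _ _ n _ n])
      (auto simp: scalar_mat_mult_left intro!: cong_four_block_mat eq_matI)
  also have "\<dots> = 2 \<cdot>\<^sub>m 1\<^sub>m (2 * n)"
    by (intro eq_matI) auto
  finally show ?thesis
    by (subst mult_smult_assoc_mat[of _ "2 * n" "2 * n" _ "2 * n"]) auto
qed

lemma re_im_mat_carrier [simp]: "X \<in> carrier_mat N n \<Longrightarrow> re_im_mat X \<in> carrier_mat N (2 * n)"
  by (simp add: re_im_mat_def)

lemma of_real_re_im_mat:
  assumes "X \<in> carrier_mat N n"
  shows "map_mat complex_of_real (re_im_mat X)
    = four_block_mat (map_mat (\<lambda>z. of_real (Re z)) X) (map_mat (\<lambda>z. of_real (Im z)) X)
        (0\<^sub>m 0 n) (0\<^sub>m 0 n)"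
  using assms by (intro eq_matI) (auto simp: re_im_mat_def)

lemma re_im_mat_change:
  assumes X: "X \<in> carrier_mat N n"
  shows "map_mat complex_of_real (re_im_mat X) * re_im_change n = conj_block X"
  unfolding of_real_re_im_mat[OF X] re_im_change_def conj_block_def
  using X by (subst mult_four_block_mat[of _ N n _ n _ 0 _ _ n _ n])
    (auto simp: scalar_mat_mult_right[of _ N n] complex_eq_iff intro!: cong_four_block_mat eq_matI)

lemma conj_block_gram:
  assumes X: "X \<in> carrier_mat N n" and orth: "mat_herm X * X = 1\<^sub>m n"
  shows "mat_herm (conj_block X) * conj_block X
    = four_block_mat (1\<^sub>m n) (transpose_mat X * X) (mat_herm (transpose_mat X * X)) (1\<^sub>m n)"
proof -
  have conj_orth: "transpose_mat X * mat_conj X = 1\<^sub>m n"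
    using arg_cong[OF orth, of mat_conj] X by (simp add: mat_conj_mult[of _ n N] mat_conj_herm)
  have herm_sym: "mat_herm X * mat_conj X = mat_herm (transpose_mat X * X)"
    using X by (simp add: mat_herm_mult[of _ n N] mat_herm_transpose)
  have block: "conj_block X = four_block_mat (mat_conj X) X (0\<^sub>m 0 n) (0\<^sub>m 0 n)"
    using X by (simp add: conj_block_def)
  have herm: "mat_herm (conj_block X) = four_block_mat (transpose_mat X) (0\<^sub>m n 0) (mat_herm X) (0\<^sub>m n 0)"
    unfolding block using X by (subst mat_herm_four_block[of _ N n]) (auto simp: mat_herm_conj)
  show ?thesis
    unfolding herm unfolding block using X
    by (subst mult_four_block_mat[of _ n N _ 0 _ n _ _ n _ n])
      (auto simp: conj_orth herm_sym orth)
qed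

lemma gram_re_im_similar:
  assumes X: "X \<in> carrier_mat N n" and orth: "mat_herm X * X = 1\<^sub>m n"
  shows "similar_mat
    ((1 / 2) \<cdot>\<^sub>m four_block_mat (1\<^sub>m n) (transpose_mat X * X) (mat_herm (transpose_mat X * X)) (1\<^sub>m n))
    (map_mat complex_of_real (transpose_mat (re_im_mat X) * re_im_mat X))"
proof -
  define Y where "Y = map_mat complex_of_real (re_im_mat X)"
  define T where "T = re_im_change n"
  define Q where "Q = (1 / 2) \<cdot>\<^sub>m mat_herm T"
  have Y: "Y \<in> carrier_mat N (2 * n)" using X by (simp add: Y_def)
  have T: "T \<in> carrier_mat (2 * n) (2 * n)" by (simp add: T_def)
  have Q: "Q \<in> carrier_mat (2 * n) (2 * n)" by (simp add: Q_def T_def)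
  have QT: "Q * T = 1\<^sub>m (2 * n)" unfolding Q_def T_def by (rule re_im_change_inverse)
  have TQ: "T * Q = 1\<^sub>m (2 * n)" by (rule mat_mult_left_right_inverse[OF Q T QT])
  have gram: "map_mat complex_of_real (transpose_mat (re_im_mat X) * re_im_mat X) = mat_herm Y * Y"
    unfolding Y_def using X by (intro of_real_gram[of _ N "2 * n"]) simp
  have Th: "mat_herm T \<in> carrier_mat (2 * n) (2 * n)" and Yh: "mat_herm Y \<in> carrier_mat (2 * n) N"
    using T Y by auto
  have K: "mat_herm Y * Y \<in> carrier_mat (2 * n) (2 * n)" using mult_carrier_mat[OF Yh Y] .
  have "Q * (mat_herm Y * Y) * T = (1 / 2) \<cdot>\<^sub>m (mat_herm T * (mat_herm Y * Y)) * T"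
    unfolding Q_def using mult_smult_assoc_mat[OF Th K] by simp
  also have "\<dots> = (1 / 2) \<cdot>\<^sub>m (mat_herm T * (mat_herm Y * Y) * T)"
    by (rule mult_smult_assoc_mat[OF mult_carrier_mat[OF Th K] T])
  also have "mat_herm T * (mat_herm Y * Y) * T = (mat_herm T * mat_herm Y * Y) * T"
    using assoc_mult_mat[OF Th Yh Y] by simp
  also have "\<dots> = (mat_herm T * mat_herm Y) * (Y * T)"
    using assoc_mult_mat[OF mult_carrier_mat[OF Th Yh] Y T] .
  also have "\<dots> = mat_herm (conj_block X) * conj_block X"
    using mat_herm_mult[OF Y T] re_im_mat_change[OF X] by (simp add: Y_def T_def)
  finally have "(1 / 2) \<cdot>\<^sub>m four_block_mat (1\<^sub>m n) (transpose_mat X * X) (mat_herm (transpose_mat X * X)) (1\<^sub>m n)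
      = Q * (mat_herm Y * Y) * T"
    by (simp add: conj_block_gram[OF X orth])
  then show ?thesis unfolding gram
    using Q T Y QT TQ by (intro similar_matI[of _ _ Q T "2 * n"]) (auto simp: mult_2)
qed

subsection \<open>The spectrum of Y^T Y\<close>

lemma gram_transpose_factor:
  assumes X: "X \<in> carrier_mat N n"
  shows "transpose_mat X * X * mat_herm X * mat_conj X
    = (transpose_mat X * X) * mat_herm (transpose_mat X * X)"
proof -
  have "mat_herm (transpose_mat X * X) = mat_herm X * mat_conj X"
    using X by (simp add: mat_herm_mult[of _ n N] mat_herm_transpose)
  then show ?thesis
    using X assoc_mult_mat[of "transpose_mat X * X" n n "mat_herm X" N "mat_conj X" n] by simp
qed

lemma char_poly_gram_re_im:
  assumes X: "X \<in> carrier_mat N n" and orth: "mat_herm X * X = 1\<^sub>m n"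
  shows "complex_of_real (poly (char_poly (transpose_mat (re_im_mat X) * re_im_mat X)) r)
    = (1 / 4) ^ n * poly (char_poly (transpose_mat X * X * mat_herm X * mat_conj X))
        (complex_of_real (4 * (r - 1 / 2)^2))"
proof -
  define B where "B = transpose_mat X * X"
  define K where "K = transpose_mat (re_im_mat X) * re_im_mat X"
  have B: "B \<in> carrier_mat n n" and Bh: "mat_herm B \<in> carrier_mat n n"
    using X by (auto simp: B_def)
  have Y: "re_im_mat X \<in> carrier_mat N (2 * n)" using X by simp
  have K: "K \<in> carrier_mat (2 * n) (2 * n)"
    unfolding K_def using mult_carrier_mat[OF transpose_carrier_mat[THEN iffD2, OF Y] Y] .
  have "((1 / 2) \<cdot>\<^sub>m B) * ((1 / 2) \<cdot>\<^sub>m mat_herm B) = (1 / 2) \<cdot>\<^sub>m ((1 / 2) \<cdot>\<^sub>m (B * mat_herm B))"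
    using mult_smult_assoc_mat[OF B smult_carrier_mat[OF Bh]] mult_smult_distrib[OF B Bh] by simp
  also have "\<dots> = (1 / 4) \<cdot>\<^sub>m (B * mat_herm B)"
    by (intro eq_matI) auto
  finally have quarter: "((1 / 2) \<cdot>\<^sub>m B) * ((1 / 2) \<cdot>\<^sub>m mat_herm B) = (1 / 4) \<cdot>\<^sub>m (B * mat_herm B)" .
  have "complex_of_real (poly (char_poly K) r) = poly (char_poly (map_mat complex_of_real K)) (of_real r)"
    unfolding of_real_hom.char_poly_hom[OF K] by (simp add: of_real_hom.poly_map_poly)
  also have "char_poly (map_mat complex_of_real K)
      = char_poly (four_block_mat ((1 / 2) \<cdot>\<^sub>m 1\<^sub>m n) ((1 / 2) \<cdot>\<^sub>m B) ((1 / 2) \<cdot>\<^sub>m mat_herm B) ((1 / 2) \<cdot>\<^sub>m 1\<^sub>m n))"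
    using char_poly_similar[OF gram_re_im_similar[OF X orth]]
      smult_four_block_mat[OF one_carrier_mat B Bh one_carrier_mat, of "1 / 2"]
    by (simp add: K_def B_def)
  also have "poly \<dots> (of_real r) = det ((of_real r - 1 / 2)^2 \<cdot>\<^sub>m 1\<^sub>m n - (1 / 4) \<cdot>\<^sub>m (B * mat_herm B))"
    using B Bh by (simp add: char_poly_scalar_four_block quarter)
  also have "\<dots> = (1 / 4) ^ n * poly (char_poly (B * mat_herm B)) (complex_of_real (4 * (r - 1 / 2)^2))"
    using B Bh by (simp add: det_scalar_minus_smult[of _ n] mult.commute)
  finally show ?thesis
    by (simp add: K_def B_def gram_transpose_factor[OF X])
qed

lemma char_poly_re_im_eval:
  assumes X: "X \<in> carrier_mat N n" and orth: "mat_herm X * X = 1\<^sub>m n"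
    and eig: "is_eigenvalue_mset (transpose_mat X * X * mat_herm X * mat_conj X) (image_mset complex_of_real M)"
  shows "poly (char_poly (transpose_mat (re_im_mat X) * re_im_mat X)) r
    = (1 / 4) ^ n * (\<Prod>\<mu>\<in>#M. 4 * (r - 1 / 2)^2 - \<mu>)"
proof -
  have char_A: "poly (char_poly (transpose_mat X * X * mat_herm X * mat_conj X)) (complex_of_real y)
      = complex_of_real (\<Prod>\<mu>\<in>#M. y - \<mu>)" for y
    using eig unfolding is_eigenvalue_mset_def by (simp only: poly_linear_factors_of_real)
  have "complex_of_real (poly (char_poly (transpose_mat (re_im_mat X) * re_im_mat X)) r)
      = complex_of_real ((1 / 4) ^ n * (\<Prod>\<mu>\<in>#M. 4 * (r - 1 / 2)^2 - \<mu>))"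
    unfolding char_poly_gram_re_im[OF X orth] char_A by simp
  then show ?thesis by (simp only: of_real_eq_iff)
qed

lemma sqrt_pair_factor:
  fixes r \<mu> :: real
  assumes "\<mu> \<ge> 0"
  shows "(r - (1 + sqrt \<mu>) / 2) * (r - (1 - sqrt \<mu>) / 2) = (1 / 4) * (4 * (r - 1 / 2)^2 - \<mu>)"
proof -
  have "(r - (1 + sqrt \<mu>) / 2) * (r - (1 - sqrt \<mu>) / 2) = (1 / 4) * (4 * (r - 1 / 2)^2 - (sqrt \<mu>)^2)"
    by (simp add: field_simps power2_eq_square)
  then show ?thesis using assms by simp
qed

lemma prod_sqrt_pairs:
  fixes M :: "real multiset"
  assumes "\<forall>\<mu>\<in>#M. \<mu> \<ge> 0"
  shows "(\<Prod>a\<in>#(\<Sum>\<^sub># (image_mset (\<lambda>\<mu>. {# (1 + sqrt \<mu>) / 2, (1 - sqrt \<mu>) / 2 #}) M)). r - a)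
    = (1 / 4) ^ size M * (\<Prod>\<mu>\<in>#M. 4 * (r - 1 / 2)^2 - \<mu>)"
  using assms
proof (induction M)
  case (add \<mu> M)
  let ?pairs = "\<lambda>M. \<Sum>\<^sub># (image_mset (\<lambda>\<mu>. {# (1 + sqrt \<mu>) / 2, (1 - sqrt \<mu>) / 2 #}) M)"
  have "(\<Prod>a\<in>#?pairs (add_mset \<mu> M). r - a)
      = ((r - (1 + sqrt \<mu>) / 2) * (r - (1 - sqrt \<mu>) / 2)) * (\<Prod>a\<in>#?pairs M. r - a)"
    by (simp add: mult.assoc)
  also have "\<dots> = ((1 / 4) * (4 * (r - 1 / 2)^2 - \<mu>)) * ((1 / 4) ^ size M * (\<Prod>\<mu>\<in>#M. 4 * (r - 1 / 2)^2 - \<mu>))"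
  proof -
    have "\<mu> \<ge> 0" and "\<forall>\<mu>\<in>#M. \<mu> \<ge> 0" using add.prems by auto
    then show ?thesis using add.IH by (simp only: sqrt_pair_factor)
  qed
  finally show ?case by (simp add: mult_ac)
qed simp

theorem lemma6:
  fixes N n :: nat and X :: "complex mat" and M :: "real multiset"
  assumes "X \<in> carrier_mat N n"
    and "n \<le> N"
    and "mat_herm X * X = 1\<^sub>m n"
    and "is_eigenvalue_mset (transpose_mat X * X * mat_herm X * mat_conj X) (image_mset complex_of_real M)"
  shows "is_eigenvalue_mset (transpose_mat (re_im_mat X) * re_im_mat X)
           (\<Sum>\<^sub># (image_mset (\<lambda>\<mu>. {# (1 + sqrt \<mu>) / 2, (1 - sqrt \<mu>) / 2 #}) M))"
proof -
  note X = assms(1)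
  define B where "B = transpose_mat X * X"
  have B: "B \<in> carrier_mat n n" using X by (simp add: B_def)
  have eig: "is_eigenvalue_mset (B * mat_herm B) (image_mset complex_of_real M)"
    using assms(4) by (simp add: B_def gram_transpose_factor[OF X])
  have size: "size M = n"
    using is_eigenvalue_mset_size[OF mult_carrier_mat[OF B mat_herm_carrier[OF B]] eig] by simp
  have nonneg: "\<forall>\<mu>\<in>#M. \<mu> \<ge> 0" by (rule eigenvalue_mset_mult_herm_nonneg[OF B eig])
  have "poly (char_poly (transpose_mat (re_im_mat X) * re_im_mat X))
      = poly (\<Prod>a\<in>#(\<Sum>\<^sub># (image_mset (\<lambda>\<mu>. {# (1 + sqrt \<mu>) / 2, (1 - sqrt \<mu>) / 2 #}) M)). [:- a, 1:])"
    by (rule ext) (simp only: char_poly_re_im_eval[OF X assms(3,4)] poly_linear_factors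
        prod_sqrt_pairs[OF nonneg] size)
  then show ?thesis unfolding is_eigenvalue_mset_def by (rule poly_eq_poly_eq_iff[THEN iffD1])
qed

end
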